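(* Let $\alpha\in\mathbb{R}\setminus\mathbb{Q}$ with continued fraction convergents $p_s/q_s$, let $n$ be an integer with $q_s\leq n<q_{s+1}$, and let $0\leq m\leq n$ be an integer. Then $$D_\alpha(m)\,D_\alpha(n-m)\geq 2^{-n}\,n^{-2n}\,q_{s+1}^{-n/q_s}.$$
   Context: $D_\alpha(n)=\prod_{k=1}^n\operatorname{dist}(k\alpha,\mathbb{Z})$, with $D_\alpha(0)=1$ (empty product). Continued fractions: $\alpha=[a_0;a_1,a_2,\dots]$ with integers $a_j\geq1$ for $j\geq1$; convergents $p_s/q_s=[a_0;a_1,\dots,a_s]$ with $p_s=a_sp_{s-1}+p_{s-2}$, $q_s=a_sq_{s-1}+q_{s-2}$ for $s\geq1$, $p_0=a_0$, $q_0=1$, $p_{-1}=1$, $q_{-1}=0$. *)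

theory Defs
  imports Complex_Main
begin

definition dist_int :: "real \<Rightarrow> real" where
  "dist_int x = \<bar>x - round x\<bar>"

definition D :: "real \<Rightarrow> nat \<Rightarrow> real" where
  "D \<alpha> n = (\<Prod>k=1..n. dist_int (real k * \<alpha>))"

fun cf_rem :: "real \<Rightarrow> nat \<Rightarrow> real" where
  "cf_rem \<alpha> 0 = \<alpha>"
| "cf_rem \<alpha> (Suc j) = 1 / (cf_rem \<alpha> j - of_int \<lfloor>cf_rem \<alpha> j\<rfloor>)"

definition cf_digit :: "real \<Rightarrow> nat \<Rightarrow> int" where
  "cf_digit \<alpha> j = \<lfloor>cf_rem \<alpha> j\<rfloor>"

(* cf_qq alpha s = (q_{s-1}, q_s), with q_{-1} = 0, q_0 = 1, q_s = a_s q_{s-1} + q_{s-2} *)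
fun cf_qq :: "real \<Rightarrow> nat \<Rightarrow> int \<times> int" where
  "cf_qq \<alpha> 0 = (0, 1)"
| "cf_qq \<alpha> (Suc s) = (let (a, b) = cf_qq \<alpha> s in (b, cf_digit \<alpha> (Suc s) * b + a))"

definition cf_q :: "real \<Rightarrow> nat \<Rightarrow> int" where
  "cf_q \<alpha> s = snd (cf_qq \<alpha> s)"

end

theory Submission
  imports Defs
begin

(* The proof has three layers.
   (1) Continued fractions: with the errors e_t = q_t alpha - p_t one has
       |e_t| >= 1/(2 q_{t+1}), and Lagrange's best-approximation property
       |k alpha - j| >= |e_t| for 0 < k < q_{t+1}.  Hence dist(k alpha, Z) >= 1/(2 q_t)
       whenever 1 <= k < q_t.
   (2) Counting: if dist(k alpha, Z) >= 1/(2q) for 1 <= k < q, then two indices k with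
       dist(k alpha, Z) < 1/(4q) are at least q apart, so at most m div q of the
       indices 1..m are that close to an integer.  Every factor of D(m) is at least
       1/(2 q_{s+1}) (by (1) with t = s+1), the remaining ones are at least 1/(4n);
       this gives D(m) D(n-m) >= (1/(2Q))^c (1/(4n))^(n-c) with c q <= n.
   (3) Elementary estimates turn this product into the stated power bound. *)

(* (p_{t-1}, p_t): numerators of the convergents, with p_{-1} = 1 and p_0 = a_0. *)
fun cf_pp :: "real \<Rightarrow> nat \<Rightarrow> int \<times> int" where
  "cf_pp \<alpha> 0 = (1, cf_digit \<alpha> 0)"
| "cf_pp \<alpha> (Suc s) = (let (a, b) = cf_pp \<alpha> s in (b, cf_digit \<alpha> (Suc s) * b + a))"

definition cf_p :: "real \<Rightarrow> nat \<Rightarrow> int" where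
  "cf_p \<alpha> t = snd (cf_pp \<alpha> t)"

definition cf_p_prev :: "real \<Rightarrow> nat \<Rightarrow> int" where
  "cf_p_prev \<alpha> t = fst (cf_pp \<alpha> t)"

definition cf_q_prev :: "real \<Rightarrow> nat \<Rightarrow> int" where
  "cf_q_prev \<alpha> t = fst (cf_qq \<alpha> t)"

lemma cf_rec_0:
  "cf_q \<alpha> 0 = 1" "cf_q_prev \<alpha> 0 = 0" "cf_p \<alpha> 0 = \<lfloor>\<alpha>\<rfloor>" "cf_p_prev \<alpha> 0 = 1"
  by (simp_all add: cf_q_def cf_q_prev_def cf_p_def cf_p_prev_def cf_digit_def)

lemma cf_rec_Suc:
  "cf_q \<alpha> (Suc t) = cf_digit \<alpha> (Suc t) * cf_q \<alpha> t + cf_q_prev \<alpha> t"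
  "cf_q_prev \<alpha> (Suc t) = cf_q \<alpha> t"
  "cf_p \<alpha> (Suc t) = cf_digit \<alpha> (Suc t) * cf_p \<alpha> t + cf_p_prev \<alpha> t"
  "cf_p_prev \<alpha> (Suc t) = cf_p \<alpha> t"
  by (simp_all add: cf_q_def cf_q_prev_def cf_p_def cf_p_prev_def case_prod_beta)

lemma cf_det: "cf_q \<alpha> t * cf_p_prev \<alpha> t - cf_p \<alpha> t * cf_q_prev \<alpha> t = (-1) ^ t"
  by (induction t) (simp_all add: cf_rec_0 cf_rec_Suc algebra_simps)

lemma cf_rem_irrational: "\<alpha> \<notin> \<rat> \<Longrightarrow> cf_rem \<alpha> j \<notin> \<rat>"
proof (induction j)
  case (Suc j)
  let ?x = "cf_rem \<alpha> j"
  have "?x = of_int \<lfloor>?x\<rfloor> + 1 / cf_rem \<alpha> (Suc j)" by simp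
  then show ?case using Suc by (metis Rats_add Rats_divide Rats_1 Rats_of_int)
qed simp

lemma frac_part_bounds:
  assumes "x \<notin> \<rat>"
  shows "0 < x - of_int \<lfloor>x\<rfloor> \<and> x - of_int \<lfloor>x\<rfloor> < 1"
proof -
  have "x \<noteq> of_int \<lfloor>x\<rfloor>" using assms by (metis Rats_of_int)
  then show ?thesis using of_int_floor_le[of x] floor_correct[of x] by linarith
qed

lemma cf_rem_Suc: "cf_rem \<alpha> (Suc j) = 1 / (cf_rem \<alpha> j - cf_digit \<alpha> j)"
  by (simp add: cf_digit_def)

declare cf_rem.simps(2)[simp del]

lemma cf_rem_gt_1: "\<alpha> \<notin> \<rat> \<Longrightarrow> cf_rem \<alpha> (Suc j) > 1"
  using frac_part_bounds[OF cf_rem_irrational[of \<alpha> j]] by (simp add: cf_rem_Suc cf_digit_def)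

lemma cf_digit_ge_1: "\<alpha> \<notin> \<rat> \<Longrightarrow> cf_digit \<alpha> (Suc j) \<ge> 1"
  using cf_rem_gt_1[of \<alpha> j] unfolding cf_digit_def by (simp add: le_floor_iff)

lemma cf_rem_less_digit: "cf_rem \<alpha> j < cf_digit \<alpha> j + 1"
  unfolding cf_digit_def by simp

lemma cf_q_pos: "\<alpha> \<notin> \<rat> \<Longrightarrow> cf_q \<alpha> t \<ge> 1 \<and> cf_q_prev \<alpha> t \<ge> 0"
proof (induction t)
  case (Suc t)
  have "cf_digit \<alpha> (Suc t) * cf_q \<alpha> t \<ge> 1 * 1"
    using cf_digit_ge_1[OF Suc.prems, of t] Suc.IH[OF Suc.prems] by (intro mult_mono) auto
  then show ?case using Suc by (simp add: cf_rec_Suc)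
qed (simp add: cf_rec_0)

lemma cf_q_mono: "\<alpha> \<notin> \<rat> \<Longrightarrow> cf_q \<alpha> t \<le> cf_q \<alpha> (Suc t)"
proof -
  assume a: "\<alpha> \<notin> \<rat>"
  have "cf_digit \<alpha> (Suc t) * cf_q \<alpha> t \<ge> 1 * cf_q \<alpha> t"
    using cf_digit_ge_1[OF a, of t] cf_q_pos[OF a, of t] by (intro mult_right_mono) auto
  then show ?thesis using cf_q_pos[OF a, of t] unfolding cf_rec_Suc by linarith
qed

definition cf_err :: "real \<Rightarrow> nat \<Rightarrow> real" where
  "cf_err \<alpha> t = of_int (cf_q \<alpha> t) * \<alpha> - of_int (cf_p \<alpha> t)"

definition cf_err_prev :: "real \<Rightarrow> nat \<Rightarrow> real" where
  "cf_err_prev \<alpha> t = of_int (cf_q_prev \<alpha> t) * \<alpha> - of_int (cf_p_prev \<alpha> t)"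

lemma cf_err_Suc:
  "cf_err \<alpha> (Suc t) = cf_digit \<alpha> (Suc t) * cf_err \<alpha> t + cf_err_prev \<alpha> t"
  "cf_err_prev \<alpha> (Suc t) = cf_err \<alpha> t"
  by (simp_all add: cf_err_def cf_err_prev_def cf_rec_Suc algebra_simps)

lemma cf_err_rem: "\<alpha> \<notin> \<rat> \<Longrightarrow> cf_err \<alpha> t * cf_rem \<alpha> (Suc t) = - cf_err_prev \<alpha> t"
proof (induction t)
  case 0
  have "\<alpha> - \<lfloor>\<alpha>\<rfloor> \<noteq> 0" using frac_part_bounds[OF 0] by simp
  then show ?case by (simp add: cf_err_def cf_err_prev_def cf_rec_0 cf_rem_Suc cf_digit_def)
next
  case (Suc t)
  let ?x = "cf_rem \<alpha> (Suc t)" and ?a = "real_of_int (cf_digit \<alpha> (Suc t))"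
  have "?x - ?a \<noteq> 0"
    using frac_part_bounds[OF cf_rem_irrational[OF Suc.prems, of "Suc t"]] by (simp add: cf_digit_def)
  moreover have "cf_err \<alpha> (Suc t) = - (?x - ?a) * cf_err \<alpha> t"
    using cf_err_Suc(1)[of \<alpha> t] Suc.IH[OF Suc.prems] by (simp add: algebra_simps)
  ultimately show ?case by (simp add: cf_rem_Suc[of \<alpha> "Suc t"] cf_err_Suc(2) field_simps)
qed

lemma cf_err_abs:
  "\<alpha> \<notin> \<rat> \<Longrightarrow> \<bar>cf_err \<alpha> t\<bar> * (cf_q \<alpha> t * cf_rem \<alpha> (Suc t) + cf_q_prev \<alpha> t) = 1"
proof (induction t)
  case 0
  have "\<alpha> - \<lfloor>\<alpha>\<rfloor> > 0" using frac_part_bounds[OF 0] by simp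
  then show ?case by (simp add: cf_err_def cf_rec_0 cf_rem_Suc cf_digit_def)
next
  case (Suc t)
  let ?x = "cf_rem \<alpha> (Suc t)" and ?y = "cf_rem \<alpha> (Suc (Suc t))"
  have y_pos: "?y > 0" using cf_rem_gt_1[OF Suc.prems, of "Suc t"] by simp
  have x_eq: "?x = cf_digit \<alpha> (Suc t) + 1 / ?y" by (simp add: cf_rem_Suc[of _ "Suc t"])
  have "\<bar>cf_err \<alpha> (Suc t) * ?y\<bar> = \<bar>cf_err \<alpha> t\<bar>"
    using cf_err_rem[OF Suc.prems, of "Suc t"] by (simp add: cf_err_Suc(2))
  then have "\<bar>cf_err \<alpha> (Suc t)\<bar> * ?y = \<bar>cf_err \<alpha> t\<bar>" using y_pos by (simp add: abs_mult)
  moreover have "cf_q \<alpha> (Suc t) * ?y + cf_q_prev \<alpha> (Suc t) = ?y * (cf_q \<alpha> t * ?x + cf_q_prev \<alpha> t)"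
    using y_pos by (simp add: x_eq cf_rec_Suc algebra_simps)
  ultimately show ?case using Suc.IH[OF Suc.prems] by (metis mult.assoc)
qed

lemma cf_err_nonzero: "\<alpha> \<notin> \<rat> \<Longrightarrow> cf_err \<alpha> t \<noteq> 0"
  using cf_err_abs[of \<alpha> t] by auto

(* Since x_{t+1} < a_{t+1} + 1, this gives |e_t| >= 1/(q_{t+1} + q_t) >= 1/(2 q_{t+1}). *)
lemma cf_err_lower: "\<alpha> \<notin> \<rat> \<Longrightarrow> 1 / (2 * cf_q \<alpha> (Suc t)) \<le> \<bar>cf_err \<alpha> t\<bar>"
proof -
  assume a: "\<alpha> \<notin> \<rat>"
  let ?y = "cf_q \<alpha> t * cf_rem \<alpha> (Suc t) + cf_q_prev \<alpha> t"
  have q: "real_of_int (cf_q \<alpha> t) \<ge> 1" "real_of_int (cf_q_prev \<alpha> t) \<ge> 0"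
    using cf_q_pos[OF a, of t] by auto
  have "cf_rem \<alpha> (Suc t) > 0" using cf_rem_gt_1[OF a, of t] by simp
  then have y_pos: "?y > 0" using q by (smt (verit) mult_pos_pos)
  have "?y \<le> real_of_int (cf_q \<alpha> t) * (cf_digit \<alpha> (Suc t) + 1) + cf_q_prev \<alpha> t"
    using cf_rem_less_digit[of \<alpha> "Suc t"] q by (intro add_right_mono mult_left_mono) auto
  also have "\<dots> = cf_q \<alpha> (Suc t) + cf_q \<alpha> t" by (simp add: cf_rec_Suc algebra_simps)
  also have "\<dots> \<le> 2 * cf_q \<alpha> (Suc t)" using cf_q_mono[OF a, of t] by simp
  finally have y_le: "?y \<le> 2 * cf_q \<alpha> (Suc t)" .
  have "\<bar>cf_err \<alpha> t\<bar> = 1 / ?y" using cf_err_abs[OF a, of t] y_pos by (simp add: field_simps)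
  then show ?thesis using y_le y_pos by (simp add: frac_le)
qed

lemma cf_err_alternates: "\<alpha> \<notin> \<rat> \<Longrightarrow> cf_err \<alpha> t * cf_err \<alpha> (Suc t) < 0"
proof -
  assume a: "\<alpha> \<notin> \<rat>"
  let ?e = "cf_err \<alpha> (Suc t)" and ?y = "cf_rem \<alpha> (Suc (Suc t))"
  have "cf_err \<alpha> t = - (?e * ?y)" using cf_err_rem[OF a, of "Suc t"] by (simp add: cf_err_Suc(2))
  then have "cf_err \<alpha> t * ?e = - (?e * ?e * ?y)" by (simp add: algebra_simps)
  moreover have "?e * ?e > 0" using cf_err_nonzero[OF a, of "Suc t"] not_real_square_gt_zero by blast
  moreover have "?y > 0" using cf_rem_gt_1[OF a, of "Suc t"] by simp
  ultimately show ?thesis by simp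
qed

(* By the determinant identity, (q_t, p_t) and (q_{t+1}, p_{t+1}) form a basis of Z^2. *)
lemma cf_coordinates:
  "\<exists>u v. k = u * cf_q \<alpha> t + v * cf_q \<alpha> (Suc t) \<and> j = u * cf_p \<alpha> t + v * cf_p \<alpha> (Suc t)"
proof -
  define d where "d = cf_q \<alpha> t * cf_p \<alpha> (Suc t) - cf_q \<alpha> (Suc t) * cf_p \<alpha> t"
  have "d = - ((-1) ^ Suc t)" using cf_det[of \<alpha> "Suc t"] by (simp add: d_def cf_rec_Suc(2,4) algebra_simps)
  then have dd: "d * d = 1" by (simp flip: power_add)
  define u where "u = d * (k * cf_p \<alpha> (Suc t) - j * cf_q \<alpha> (Suc t))"
  define v where "v = d * (cf_q \<alpha> t * j - cf_p \<alpha> t * k)"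
  have "u * cf_q \<alpha> t + v * cf_q \<alpha> (Suc t) = (d * d) * k"
    "u * cf_p \<alpha> t + v * cf_p \<alpha> (Suc t) = (d * d) * j"
    by (simp_all add: u_def v_def d_def algebra_simps)
  then show ?thesis using dd by (metis mult_1)
qed

lemma lattice_coordinates_sign:
  fixes k u v a b :: int
  assumes "0 < k" "k < b" "0 \<le> a" "k = u * a + v * b"
  shows "u \<noteq> 0 \<and> u * v \<le> 0"
proof
  show "u \<noteq> 0"
  proof
    assume "u = 0"
    then have "k = v * b" using assms(4) by simp
    then show False using assms(1,2) by (smt (verit) mult_le_cancel_right1 mult_nonpos_nonneg)
  qed
  show "u * v \<le> 0"
  proof (rule ccontr)
    assume "\<not> u * v \<le> 0"
    then consider "u > 0" "v > 0" | "u < 0" "v < 0" by (metis not_le zero_less_mult_iff)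
    then show False
    proof cases
      case 1
      then have "u * a \<ge> 0" "v * b \<ge> b" using assms by auto
      then show False using assms by linarith
    next
      case 2
      then have "u * a \<le> 0" "v * b < 0" using assms by (auto simp: mult_nonpos_nonneg mult_neg_pos)
      then show False using assms by linarith
    qed
  qed
qed

lemma abs_add_same_sign: "0 \<le> (x::real) * y \<Longrightarrow> \<bar>x + y\<bar> = \<bar>x\<bar> + \<bar>y\<bar>"
  by (auto simp: zero_le_mult_iff abs_if)

(* Lagrange: no multiple k alpha with 0 < k < q_{t+1} is closer to an integer than q_t alpha.
   Write (k, j) in the basis above; both terms u e_t and v e_{t+1} have the same sign. *)
lemma cf_best_approximation:
  assumes a: "\<alpha> \<notin> \<rat>" and k: "0 < k" "k < cf_q \<alpha> (Suc t)"
  shows "\<bar>cf_err \<alpha> t\<bar> \<le> \<bar>of_int k * \<alpha> - of_int j\<bar>"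
proof -
  obtain u v where
    kj: "k = u * cf_q \<alpha> t + v * cf_q \<alpha> (Suc t)" "j = u * cf_p \<alpha> t + v * cf_p \<alpha> (Suc t)"
    using cf_coordinates by blast
  have eq: "of_int k * \<alpha> - of_int j = of_int u * cf_err \<alpha> t + of_int v * cf_err \<alpha> (Suc t)"
    by (simp add: kj cf_err_def algebra_simps)
  have uv: "u \<noteq> 0" "u * v \<le> 0"
    using lattice_coordinates_sign[OF k _ kj(1)] cf_q_pos[OF a, of t] by auto
  have "(of_int u * cf_err \<alpha> t) * (of_int v * cf_err \<alpha> (Suc t))
      = of_int (u * v) * (cf_err \<alpha> t * cf_err \<alpha> (Suc t))" by (simp add: algebra_simps)
  also have "\<dots> \<ge> 0"
  proof (rule mult_nonpos_nonpos)
    show "real_of_int (u * v) \<le> 0" using uv(2) by linarith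
  qed (use cf_err_alternates[OF a, of t] in simp)
  finally have "\<bar>of_int k * \<alpha> - of_int j\<bar> = \<bar>of_int u\<bar> * \<bar>cf_err \<alpha> t\<bar> + \<bar>of_int v * cf_err \<alpha> (Suc t)\<bar>"
    unfolding eq abs_mult[symmetric] by (rule abs_add_same_sign)
  moreover have "\<bar>of_int u :: real\<bar> \<ge> 1" using uv(1) by linarith
  ultimately show ?thesis by (smt (verit) abs_ge_zero mult_le_cancel_right1)
qed

lemma dist_int_nonneg: "0 \<le> dist_int x"
  by (simp add: dist_int_def)

lemma dist_int_le: "dist_int x \<le> \<bar>x - of_int j\<bar>"
  unfolding dist_int_def by (rule round_diff_minimal)

lemma dist_int_diff: "dist_int (x - y) \<le> dist_int x + dist_int y"
proof -
  have "dist_int (x - y) \<le> \<bar>(x - y) - of_int (round x - round y)\<bar>" by (rule dist_int_le)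
  also have "\<dots> \<le> dist_int x + dist_int y" unfolding dist_int_def by simp
  finally show ?thesis .
qed

lemma cf_dist_int_lower:
  assumes "\<alpha> \<notin> \<rat>" "1 \<le> k" "int k < cf_q \<alpha> t"
  shows "1 / (2 * real_of_int (cf_q \<alpha> t)) \<le> dist_int (real k * \<alpha>)"
proof (cases t)
  case 0
  then show ?thesis using assms by (simp add: cf_rec_0)
next
  case (Suc t')
  have "1 / (2 * cf_q \<alpha> t) \<le> \<bar>cf_err \<alpha> t'\<bar>" using cf_err_lower[OF assms(1), of t'] Suc by simp
  also have "\<dots> \<le> \<bar>of_int (int k) * \<alpha> - of_int (round (real k * \<alpha>))\<bar>"
    using cf_best_approximation[OF assms(1), of "int k" t'] assms(2,3) Suc by simp
  finally show ?thesis by (simp add: dist_int_def)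
qed

definition close_returns :: "real \<Rightarrow> nat \<Rightarrow> nat \<Rightarrow> nat set" where
  "close_returns \<alpha> q m = {k \<in> {1..m}. dist_int (real k * \<alpha>) < 1 / (4 * real q)}"

(* If the first q - 1 multiples stay 1/(2q) away from the integers, two close returns are
   at least q apart, so k div q is injective on them and at most m div q of them occur. *)
lemma card_close_returns:
  fixes q m :: nat
  assumes q: "q \<ge> 1"
    and spaced: "\<And>k. 1 \<le> k \<Longrightarrow> k < q \<Longrightarrow> 1 / (2 * real q) \<le> dist_int (real k * \<alpha>)"
  shows "card (close_returns \<alpha> q m) \<le> m div q"
proof -
  let ?S = "close_returns \<alpha> q m"
  have gap: "1 / (4 * real q) + 1 / (4 * real q) = 1 / (2 * real q)" by simp
  have no_pair: "q \<le> k - j" if "j \<in> ?S" "k \<in> ?S" "j < k" for j k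
  proof (rule ccontr)
    assume "\<not> q \<le> k - j"
    then have "1 / (2 * real q) \<le> dist_int (real (k - j) * \<alpha>)" using that by (intro spaced) auto
    also have "\<dots> \<le> dist_int (real k * \<alpha>) + dist_int (real j * \<alpha>)"
      using dist_int_diff[of "real k * \<alpha>" "real j * \<alpha>"] that(3) by (simp add: algebra_simps)
    also have "\<dots> < 1 / (2 * real q)" using that(1,2) gap by (simp add: close_returns_def)
    finally show False by simp
  qed
  have same_block: "k - j < q" if "j < k" "j div q = k div q" for j k :: nat
  proof -
    have "k div q * q \<le> j" "k = k div q * q + k mod q" "k mod q < q"
      using q div_times_less_eq_dividend[of j q] that(2) by simp_all
    then show ?thesis using that by linarith
  qed
  have "inj_on (\<lambda>k. k div q) ?S"
  proof (rule inj_onI, rule ccontr)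
    fix j k assume jk: "j \<in> ?S" "k \<in> ?S" "j div q = k div q" "j \<noteq> k"
    then show False using no_pair same_block by (metis linorder_neqE_nat not_le)
  qed
  moreover have "(\<lambda>k. k div q) ` ?S \<subseteq> {1..m div q}"
  proof
    fix x assume "x \<in> (\<lambda>k. k div q) ` ?S"
    then obtain k where k: "k \<in> ?S" "x = k div q" by auto
    have "q \<le> k"
    proof (rule ccontr)
      assume "\<not> q \<le> k"
      then have "1 / (2 * real q) \<le> dist_int (real k * \<alpha>)" using k(1) by (intro spaced) (auto simp: close_returns_def)
      then show False using k(1) gap dist_int_nonneg[of "real k * \<alpha>"] by (simp add: close_returns_def)
    qed
    then have "1 \<le> x" using k(2) q by (simp add: div_greater_zero_iff Suc_le_eq)
    then show "x \<in> {1..m div q}" using k by (auto simp: close_returns_def div_le_mono)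
  qed
  ultimately have "card ?S \<le> card {1..m div q}" by (rule card_inj_on_le) simp
  then show ?thesis by simp
qed

lemma prod_split_lower:
  fixes f :: "'a \<Rightarrow> real"
  assumes "finite A" "S \<subseteq> A" "\<And>k. k \<in> S \<Longrightarrow> a \<le> f k" "\<And>k. k \<in> A - S \<Longrightarrow> b \<le> f k"
    and "0 \<le> a" "0 \<le> b"
  shows "a ^ card S * b ^ (card A - card S) \<le> prod f A"
proof -
  have fin: "finite S" using assms(1,2) finite_subset by blast
  have "a ^ card S \<le> prod f S" using prod_mono[of S "\<lambda>_. a" f] assms(3,5) by simp
  moreover have "b ^ (card A - card S) \<le> prod f (A - S)"
    using prod_mono[of "A - S" "\<lambda>_. b" f] assms(4,6) card_Diff_subset[OF fin assms(2)] by simp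
  ultimately have "a ^ card S * b ^ (card A - card S) \<le> prod f S * prod f (A - S)"
    using assms(5,6) by (intro mult_mono) (auto intro: order_trans[OF zero_le_power])
  also have "\<dots> = prod f A" by (metis prod.subset_diff[OF assms(2,1)] mult.commute)
  finally show ?thesis .
qed

(* Counting bound for one product: close returns contribute at least a each, all other
   factors at least 1/(4q) >= 1/(4n). *)
lemma D_lower_bound:
  fixes q n m :: nat and a :: real
  assumes q: "1 \<le> q" "q \<le> n"
    and spaced: "\<And>k. 1 \<le> k \<Longrightarrow> k < q \<Longrightarrow> 1 / (2 * real q) \<le> dist_int (real k * \<alpha>)"
    and uniform: "\<And>k. 1 \<le> k \<Longrightarrow> k \<le> n \<Longrightarrow> a \<le> dist_int (real k * \<alpha>)"
    and "0 \<le> a" "m \<le> n"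
  shows "\<exists>c \<le> m div q. a ^ c * (1 / (4 * real n)) ^ (m - c) \<le> D \<alpha> m"
proof -
  let ?S = "close_returns \<alpha> q m"
  have "a ^ card ?S * (1 / (4 * real n)) ^ (card {1..m} - card ?S) \<le> (\<Prod>k=1..m. dist_int (real k * \<alpha>))"
  proof (rule prod_split_lower)
    show "a \<le> dist_int (real k * \<alpha>)" if "k \<in> ?S" for k
      using that \<open>m \<le> n\<close> by (intro uniform) (auto simp: close_returns_def)
    show "1 / (4 * real n) \<le> dist_int (real k * \<alpha>)" if "k \<in> {1..m} - ?S" for k
    proof -
      have "1 / (4 * real n) \<le> 1 / (4 * real q)" using q by (intro divide_left_mono) auto
      then show ?thesis using that by (auto simp: close_returns_def)
    qed
  qed (use \<open>0 \<le> a\<close> in \<open>auto simp: close_returns_def\<close>)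
  then show ?thesis using card_close_returns[OF q(1) spaced] by (auto simp: D_def)
qed

lemma D_pair_lower_bound:
  fixes q n m :: nat and a :: real
  assumes q: "1 \<le> q" "q \<le> n"
    and spaced: "\<And>k. 1 \<le> k \<Longrightarrow> k < q \<Longrightarrow> 1 / (2 * real q) \<le> dist_int (real k * \<alpha>)"
    and uniform: "\<And>k. 1 \<le> k \<Longrightarrow> k \<le> n \<Longrightarrow> a \<le> dist_int (real k * \<alpha>)"
    and a: "0 \<le> a" and m: "m \<le> n"
  shows "\<exists>c. c * q \<le> n \<and> a ^ c * (1 / (4 * real n)) ^ (n - c) \<le> D \<alpha> m * D \<alpha> (n - m)"
proof -
  let ?b = "1 / (4 * real n)"
  obtain c1 where c1: "c1 \<le> m div q" "a ^ c1 * ?b ^ (m - c1) \<le> D \<alpha> m"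
    using D_lower_bound[OF q spaced uniform a m] by blast
  obtain c2 where c2: "c2 \<le> (n - m) div q" "a ^ c2 * ?b ^ (n - m - c2) \<le> D \<alpha> (n - m)"
    using D_lower_bound[OF q spaced uniform a, of "n - m"] by auto
  have "c1 * q \<le> m" "c2 * q \<le> n - m"
    using c1(1) c2(1) div_times_less_eq_dividend le_trans mult_le_mono1 by blast+
  then have sum: "(c1 + c2) * q \<le> n" using m by (simp add: add_mult_distrib)
  have "c1 \<le> m" "c2 \<le> n - m" using c1(1) c2(1) by (meson div_le_dividend le_trans)+
  then have "n - (c1 + c2) = (m - c1) + (n - m - c2)" using m by linarith
  then have "a ^ (c1 + c2) * ?b ^ (n - (c1 + c2)) = (a ^ c1 * ?b ^ (m - c1)) * (a ^ c2 * ?b ^ (n - m - c2))"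
    by (simp add: power_add algebra_simps)
  also have "\<dots> \<le> D \<alpha> m * D \<alpha> (n - m)"
    using c1(2) c2(2) a by (intro mult_mono) (auto simp: D_def dist_int_nonneg prod_nonneg)
  finally show ?thesis using sum by blast
qed

lemma nat_power_estimate:
  fixes n c :: nat
  assumes "2 \<le> n" "c \<le> n"
  shows "2 ^ c * 4 ^ (n - c) * n ^ (n - c) \<le> 2 ^ n * n ^ (2 * n)"
proof -
  have four: "(4::nat) ^ (n - c) = 2 ^ (n - c) * 2 ^ (n - c)"
    by (simp flip: power_mult_distrib)
  have two: "(2::nat) ^ c * 2 ^ (n - c) = 2 ^ n"
    using assms(2) by (simp flip: power_add)
  have "2 ^ c * 4 ^ (n - c) * n ^ (n - c) = 2 ^ n * (2 ^ (n - c) * n ^ (n - c))"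
    unfolding four two[symmetric] by (simp add: mult_ac)
  also have "\<dots> \<le> 2 ^ n * (n ^ n * n ^ n)"
  proof -
    have "2 ^ (n - c) \<le> n ^ (n - c)" "n ^ (n - c) \<le> n ^ n"
      using assms by (intro power_mono power_increasing; simp)+
    then show ?thesis by (intro mult_le_mono2 mult_le_mono) auto
  qed
  also have "\<dots> = 2 ^ n * n ^ (2 * n)" by (simp add: mult_2 power_add)
  finally show ?thesis .
qed

lemma target_le_product:
  fixes n c q :: nat and Q :: real
  assumes n: "2 \<le> n" and q: "1 \<le> q" and c: "c * q \<le> n" and Q: "1 \<le> Q"
  shows "2 powr (- real n) * real n powr (- 2 * real n) * Q powr (- real n / real q)
         \<le> (1 / (2 * Q)) ^ c * (1 / (4 * real n)) ^ (n - c)"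
proof -
  have cn: "c \<le> n" using c q by (metis le_trans mult_le_mono2 nat_mult_1_right)
  have "real c * real q \<le> real n" using c by (metis of_nat_le_iff of_nat_mult)
  then have "real c \<le> real n / real q" using q by (simp add: field_simps)
  then have "Q powr (- real n / real q) \<le> Q powr (- real c)" using Q by (intro powr_mono) auto
  also have "\<dots> = 1 / Q ^ c" using Q by (simp add: powr_minus powr_realpow divide_inverse)
  finally have Qc: "Q powr (- real n / real q) \<le> 1 / Q ^ c" .
  have two: "2 powr (- real n) = 1 / 2 ^ n" by (simp add: powr_minus powr_realpow divide_inverse)
  have pow_n: "real n powr (- 2 * real n) = 1 / real n ^ (2 * n)"
  proof -
    have "real n powr real (2 * n) = real n ^ (2 * n)" using n by (intro powr_realpow) simp
    moreover have "- 2 * real n = - real (2 * n)" by simp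
    ultimately show ?thesis by (simp only: powr_minus divide_inverse mult_1)
  qed
  have "real (2 ^ c * 4 ^ (n - c) * n ^ (n - c)) \<le> real (2 ^ n * n ^ (2 * n))"
    using nat_power_estimate[OF n cn] by (simp only: of_nat_le_iff)
  then have estimate: "2 ^ c * 4 ^ (n - c) * real n ^ (n - c) \<le> 2 ^ n * real n ^ (2 * n)" by simp
  have pos: "0 < 2 ^ c * 4 ^ (n - c) * real n ^ (n - c) * Q ^ c" using n Q by simp
  have "2 powr (- real n) * real n powr (- 2 * real n) * Q powr (- real n / real q)
      \<le> 1 / 2 ^ n * (1 / real n ^ (2 * n)) * (1 / Q ^ c)"
    unfolding two pow_n using Qc by (intro mult_left_mono) auto
  also have "\<dots> = 1 / (2 ^ n * real n ^ (2 * n) * Q ^ c)" by simp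
  also have "\<dots> \<le> 1 / (2 ^ c * 4 ^ (n - c) * real n ^ (n - c) * Q ^ c)"
    using pos estimate n Q by (intro divide_left_mono mult_right_mono) (auto intro!: mult_pos_pos)
  also have "\<dots> = (1 / (2 * Q)) ^ c * (1 / (4 * real n)) ^ (n - c)"
    by (simp add: power_mult_distrib power_divide)
  finally show ?thesis .
qed

lemma D_pair_lower_bound_powr:
  fixes q n m :: nat and Q :: real
  assumes q: "1 \<le> q" "q \<le> n" and Q: "1 \<le> Q"
    and spaced: "\<And>k. 1 \<le> k \<Longrightarrow> k < q \<Longrightarrow> 1 / (2 * real q) \<le> dist_int (real k * \<alpha>)"
    and uniform: "\<And>k. 1 \<le> k \<Longrightarrow> k \<le> n \<Longrightarrow> 1 / (2 * Q) \<le> dist_int (real k * \<alpha>)"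
    and m: "m \<le> n"
  shows "2 powr (- real n) * real n powr (- 2 * real n) * Q powr (- real n / real q)
         \<le> D \<alpha> m * D \<alpha> (n - m)"
proof (cases "n = 1")
  case True
  then have "D \<alpha> m * D \<alpha> (n - m) = dist_int \<alpha>" using m by (cases m) (auto simp: D_def)
  moreover have "real n = 1" "real q = 1" using True q by simp_all
  ultimately show ?thesis using uniform[of 1] Q by (simp add: powr_neg_one)
next
  case False
  then have "2 \<le> n" using q by simp
  obtain c where c: "c * q \<le> n"
    and bound: "(1 / (2 * Q)) ^ c * (1 / (4 * real n)) ^ (n - c) \<le> D \<alpha> m * D \<alpha> (n - m)"
    using D_pair_lower_bound[OF q spaced uniform _ m] Q by auto
  show ?thesis using target_le_product[OF \<open>2 \<le> n\<close> q(1) c Q] bound by (rule order_trans)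
qed

(* The theorem: the spacing properties hold with q = q_s and Q = q_{s+1} by (1). *)
theorem lemma3:
  fixes \<alpha> :: real and s n m :: nat
  assumes "\<alpha> \<notin> \<rat>"
    and "cf_q \<alpha> s \<le> int n" and "int n < cf_q \<alpha> (Suc s)"
    and "m \<le> n"
  shows "D \<alpha> m * D \<alpha> (n - m) \<ge>
    2 powr (- real n) * real n powr (- 2 * real n) *
    real_of_int (cf_q \<alpha> (Suc s)) powr (- real n / real_of_int (cf_q \<alpha> s))"
proof -
  define q where "q = nat (cf_q \<alpha> s)"
  define Q where "Q = real_of_int (cf_q \<alpha> (Suc s))"
  have q: "real q = real_of_int (cf_q \<alpha> s)" "1 \<le> q" "q \<le> n"
    using cf_q_pos[OF assms(1), of s] assms(2) by (auto simp: q_def)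
  have Q: "1 \<le> Q" using assms(3) q by (simp add: Q_def)
  have spaced: "1 / (2 * real q) \<le> dist_int (real k * \<alpha>)" if "1 \<le> k" "k < q" for k
    using cf_dist_int_lower[OF assms(1), of k s] that q by (simp add: q_def)
  have uniform: "1 / (2 * Q) \<le> dist_int (real k * \<alpha>)" if "1 \<le> k" "k \<le> n" for k
    using cf_dist_int_lower[OF assms(1), of k "Suc s"] that assms(3) by (simp add: Q_def)
  show ?thesis
    using D_pair_lower_bound_powr[OF q(2,3) Q spaced uniform assms(4)] by (simp only: Q_def q(1))
qed

end
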